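(* Let $(\{\mathcal{I}_i\}_{i=1}^k,Q,W)$ be a weighted stochastic block model on $[n]$ ($n>k$) with $B=Q\odot W$, and suppose there are $\rho\ge1$ and $\Delta>0$ with $\max_i|\mathcal{I}_i|/\min_i|\mathcal{I}_i|\le\rho$ and $\min_iB_{ii}-2\rho\max_i\sum_{j\ne i}B_{ij}\ge\Delta$. Let $A_{\mathrm{blk}}=P_{\{\mathcal{I}_i\}}BP_{\{\mathcal{I}_i\}}^T$ and $L_{\mathrm{blk}}=\mathrm{diag}\{A_{\mathrm{blk}}\mathbf{1}_n\}-A_{\mathrm{blk}}$. Let $n_{\min}=\min_i|\mathcal{I}_i|$ and $b_{\min}=\min_i[B\mathbf{1}_k]_i$. Then: (1) $L_{\mathrm{blk}}$ is $k$-block-ideal (with respect to $\{\mathcal{I}_i\}_{i=1}^k$); (2) $\lambda_{k+1}(L_{\mathrm{blk}})\ge b_{\min}n_{\min}$; (3) $\lambda_{k+1}(L_{\mathrm{blk}})-\lambda_k(L_{\mathrm{blk}})\ge\Delta n_{\min}$.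
   Context: Weighted stochastic block model $(\{\mathcal{I}_i\}_{i=1}^k,Q,W)$: $\{\mathcal{I}_i\}$ a $k$-way partition of $[n]$, $Q\in[0,1]^{k\times k}$ and $W\in\mathbb{R}_{\ge0}^{k\times k}$ symmetric; adjacency entries $A_{ij}=A_{ji}$ equal $W_{(i),(j)}$ with probability $Q_{(i),(j)}$ and $0$ otherwise, independently for $i\ge j$, where $(j)=i$ iff $j\in\mathcal{I}_i$. Thus $A_{\mathrm{blk}}$ is the expected adjacency matrix (as printed). $\odot$ is the Hadamard product; $P_{\{\mathcal{I}_i\}}=[\mathbf{1}_{\mathcal{I}_1}\ \cdots\ \mathbf{1}_{\mathcal{I}_k}]$ with $\mathbf{1}_\mathcal{I}$ the indicator vector of $\mathcal{I}$. $\lambda_i(\cdot)$ denotes the $i$-th smallest eigenvalue. A Laplacian $L$ is $k$-block-ideal with respect to $\{\mathcal{I}_i\}$ if there is an invertible $S\in\mathbb{R}^{k\times k}$ with $[v_1(L)\ \cdots\ v_k(L)]=P_{\{\mathcal{I}_i\}}S$, where $v_1(L),\dots,v_k(L)$ are orthonormal eigenvectors for the $k$ smallest eigenvalues of $L$. *)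

theory Defs
  imports "Jordan_Normal_Form.Char_Poly" "HOL-Library.Multiset"
begin

text \<open>The j-th smallest eigenvalue (1-indexed, counted with algebraic multiplicity)
  of a square real matrix: the j-th entry of the ascending list of roots of the
  characteristic polynomial.\<close>
definition eig_asc :: "real mat \<Rightarrow> nat \<Rightarrow> real" where
  "eig_asc L j = sorted_list_of_multiset (proots (char_poly L)) ! (j - 1)"

definition blk :: "nat \<Rightarrow> (nat \<Rightarrow> nat) \<Rightarrow> nat \<Rightarrow> nat set" where
  "blk n cl j = {i. i < n \<and> cl i = j}"

definition partition_mat :: "nat \<Rightarrow> nat \<Rightarrow> (nat \<Rightarrow> nat) \<Rightarrow> real mat" where
  "partition_mat n k cl = mat n k (\<lambda>(i, j). if cl i = j then 1 else 0)"

definition block_ideal :: "nat \<Rightarrow> nat \<Rightarrow> (nat \<Rightarrow> nat) \<Rightarrow> real mat \<Rightarrow> bool" where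
  "block_ideal n k cl L \<longleftrightarrow>
     (\<exists>v :: nat \<Rightarrow> real vec. \<exists>S.
        (\<forall>j<k. v j \<in> carrier_vec n \<and> L *\<^sub>v v j = eig_asc L (Suc j) \<cdot>\<^sub>v v j) \<and>
        (\<forall>i<k. \<forall>j<k. v i \<bullet> v j = (if i = j then 1 else 0)) \<and>
        S \<in> carrier_mat k k \<and> invertible_mat S \<and>
        mat_of_cols n (map v [0..<k]) = partition_mat n k cl * S)"

end

theory Submission
  imports Defs
begin

text \<open>On the vertices of block a the Laplacian acts as
  (L w)_i = deg_a w_i - \<Sum>_l B_al s_l(w), where deg_a = \<Sum>_l B_al |I_l| and s_l(w) is the sum of w
  over block l. Hence an eigenvector whose eigenvalue lies below min_a deg_a is constant on blocks,
  while one whose eigenvalue exceeds 2 n_max max_a \<Sum>_{l \<noteq> a} B_al has all block sums zero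
  (compare both sides on the block where |s_a| is largest). Consequently no eigenvalue lies strictly
  between these two thresholds; at most k orthonormal eigenvectors are block-constant, and the k block
  indicators are orthogonal to every eigenvector above the lower threshold, so exactly k eigenvalues lie
  below the gap and their eigenvectors span the block-constant vectors. Diagonal dominance makes the
  gap at least \<Delta> n_min, and min_a deg_a \<ge> b_min n_min.\<close>

section \<open>Orthonormal eigenbases of real symmetric matrices\<close>

lemma sym_mat_index_swap:
  assumes "A \<in> carrier_mat n n" "transpose_mat A = A" "i < n" "j < n"
  shows "A $$ (j, i) = A $$ (i, j)"
  using assms by (metis carrier_matD index_transpose_mat(1))

lemma sym_mat_complex_eigenvalue_real:
  fixes A :: "real mat"
  assumes A: "A \<in> carrier_mat n n" and sym: "transpose_mat A = A"
    and z: "z \<in> carrier_vec n" and z0: "z \<noteq> 0\<^sub>v n"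
    and eig: "map_mat complex_of_real A *\<^sub>v z = a \<cdot>\<^sub>v z"
  shows "a \<in> \<real>"
proof -
  define Ac where "Ac = map_mat complex_of_real A"
  have Ac: "Ac \<in> carrier_mat n n" using A unfolding Ac_def by simp
  have AcT: "transpose_mat Ac = Ac" unfolding Ac_def by (metis map_mat_transpose sym)
  have real_conj: "conjugate (Ac *\<^sub>v w) = Ac *\<^sub>v conjugate w" if "w \<in> carrier_vec n" for w
  proof (rule eq_vecI)
    fix i assume "i < dim_vec (Ac *\<^sub>v conjugate w)"
    hence i: "i < n" using Ac by simp
    have "conjugate (row Ac i) = row Ac i"
      using Ac i unfolding Ac_def by (intro eq_vecI) auto
    moreover have "conjugate (row Ac i \<bullet> w) = conjugate (row Ac i) \<bullet> conjugate w"
      using Ac i that by (intro conjugate_sprod_vec[of _ n]) auto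
    ultimately show "conjugate (Ac *\<^sub>v w) $ i = (Ac *\<^sub>v conjugate w) $ i"
      using i Ac that by simp
  qed (use Ac in simp)
  have pos: "z \<bullet>c z \<noteq> 0" using z z0 by simp
  have "a * (z \<bullet>c z) = (Ac *\<^sub>v z) \<bullet>c z"
    using eig z unfolding Ac_def by simp
  also have "\<dots> = (transpose_mat Ac *\<^sub>v z) \<bullet> conjugate z"
    unfolding AcT ..
  also have "\<dots> = z \<bullet> conjugate (Ac *\<^sub>v z)"
    using transpose_vec_mult_scalar[OF Ac, of "conjugate z" z] z real_conj[OF z] by simp
  also have "\<dots> = cnj a * (z \<bullet>c z)"
    using eig z unfolding Ac_def by (simp add: conjugate_smult_vec)
  finally have "a = cnj a" using pos by simp
  thus ?thesis by (metis Reals_cnj_iff)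
qed

lemma sym_mat_unit_eigenvector:
  fixes A :: "real mat"
  assumes A: "A \<in> carrier_mat n n" and sym: "transpose_mat A = A" and n: "n > 0"
  obtains e v where "v \<in> carrier_vec n" "v \<bullet> v = 1" "A *\<^sub>v v = e \<cdot>\<^sub>v v"
proof -
  define Ac where "Ac = map_mat complex_of_real A"
  have Ac: "Ac \<in> carrier_mat n n" using A by (simp add: Ac_def)
  obtain as where cp: "char_poly Ac = (\<Prod>a\<leftarrow>as. [:- a, 1:])" and len: "length as = n"
    using char_poly_factorized[OF Ac] by blast
  have "poly (char_poly Ac) (as ! 0) = 0"
    unfolding cp using len n by (intro linear_poly_root) simp
  then obtain z where "eigenvector Ac z (as ! 0)"
    using eigenvalue_root_char_poly[OF Ac] unfolding eigenvalue_def by blast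
  hence "as ! 0 \<in> \<real>"
    using Ac unfolding eigenvector_def Ac_def by (auto intro: sym_mat_complex_eigenvalue_real[OF A sym])
  then obtain e where e: "as ! 0 = complex_of_real e" by (auto elim: Reals_cases)
  have "complex_of_real (poly (char_poly A) e) = poly (char_poly Ac) (as ! 0)"
    unfolding e Ac_def of_real_hom.char_poly_hom[OF A] by simp
  hence "eigenvalue A e"
    using eigenvalue_root_char_poly[OF A] \<open>poly (char_poly Ac) (as ! 0) = 0\<close> by simp
  then obtain v where v: "v \<in> carrier_vec n" "v \<noteq> 0\<^sub>v n" "A *\<^sub>v v = e \<cdot>\<^sub>v v"
    using A unfolding eigenvalue_def eigenvector_def by auto
  define c where "c = 1 / sqrt (v \<bullet> v)"
  have "v \<bullet> v > 0" using conjugate_square_greater_0_vec[OF v(1)] v(2) by simp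
  hence "(c \<cdot>\<^sub>v v) \<bullet> (c \<cdot>\<^sub>v v) = 1"
    using v(1) unfolding c_def by (simp add: field_simps)
  moreover have "A *\<^sub>v (c \<cdot>\<^sub>v v) = e \<cdot>\<^sub>v (c \<cdot>\<^sub>v v)"
    using A v by (simp add: mult_mat_vec smult_smult_assoc mult.commute)
  ultimately show ?thesis using that smult_carrier_vec v(1) by blast
qed

lemma householder_mat_involution:
  fixes u :: "real vec"
  assumes u: "u \<in> carrier_vec n" and c: "c * (c * (u \<bullet> u) - 2) = 0"
  defines "W \<equiv> mat n n (\<lambda>(i, j). (if i = j then 1 else 0) - c * u $ i * u $ j)"
  shows "W * W = 1\<^sub>m n"
proof (rule eq_matI)
  fix i j assume "i < dim_row (1\<^sub>m n)" "j < dim_col (1\<^sub>m n)"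
  hence i: "i < n" and j: "j < n" by auto
  have "(W * W) $$ (i, j) = (\<Sum>l<n. ((if i = l then 1 else 0) - c * u $ i * u $ l) *
      ((if l = j then 1 else 0) - c * u $ l * u $ j))"
    using i j unfolding W_def by (simp add: scalar_prod_def lessThan_atLeast0)
  also have "\<dots> = (\<Sum>l<n. (if i = l then 1 else 0) * (if l = j then 1 else 0))
      - (\<Sum>l<n. (if i = l then 1 else 0) * (c * u $ l * u $ j))
      - (\<Sum>l<n. (if l = j then 1 else 0) * (c * u $ i * u $ l))
      + c * c * u $ i * u $ j * (\<Sum>l<n. u $ l * u $ l)"
    by (simp add: algebra_simps sum_subtractf sum.distrib sum_distrib_left)
  also have "\<dots> = (if i = j then 1 else 0) - c * u $ i * u $ j - c * u $ i * u $ j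
      + c * c * u $ i * u $ j * (u \<bullet> u)"
    using i j u
    by (simp add: scalar_prod_def lessThan_atLeast0 if_distrib[of "\<lambda>x. x * _"] cong: if_cong)
  also have "\<dots> = (if i = j then 1 else 0) + c * (c * (u \<bullet> u) - 2) * u $ i * u $ j"
    by (simp add: algebra_simps)
  finally show "(W * W) $$ (i, j) = 1\<^sub>m n $$ (i, j)" using i j c by simp
qed (simp_all add: W_def)

lemma sym_involution_with_first_col:
  fixes v :: "real vec"
  assumes v: "v \<in> carrier_vec n" and vv: "v \<bullet> v = 1" and n: "n > 0"
  obtains W where "W \<in> carrier_mat n n" "transpose_mat W = W" "W * W = 1\<^sub>m n" "col W 0 = v"
proof -
  define u where "u = unit_vec n 0 - v"
  define q where "q = u \<bullet> u"
  define c where "c = 2 / q"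
  define W where "W = mat n n (\<lambda>(i, j). (if i = j then 1 else 0) - c * u $ i * u $ j)"
  have u: "u \<in> carrier_vec n" using v by (simp add: u_def)
  have "q = (unit_vec n 0 - v) \<bullet> unit_vec n 0 - (unit_vec n 0 - v) \<bullet> v"
    unfolding q_def u_def using v by (intro scalar_prod_minus_distrib[of _ n]) auto
  also have "\<dots> = 2 * u $ 0"
    using v vv n unfolding u_def by (simp add: minus_scalar_prod_distrib[of _ n])
  finally have q: "q = 2 * u $ 0" .
  have u0: "u = 0\<^sub>v n" if "q = 0"
    using that u unfolding q_def by (metis conjugate_square_eq_0_vec vec_conjugate_real)
  \<comment> \<open>With the convention 2 / 0 = 0 the case v = unit_vec n 0 needs no separate treatment.\<close>
  have cq: "c * (c * q - 2) = 0" unfolding c_def by (cases "q = 0") auto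
  have cu: "c * u $ 0 * u $ i = u $ i" if "i < n" for i
    using q u0 that unfolding c_def by (cases "q = 0") auto
  have "W * W = 1\<^sub>m n"
    using u cq[unfolded q_def] unfolding W_def by (rule householder_mat_involution)
  moreover have "col W 0 = v"
  proof (rule eq_vecI)
    fix i assume "i < dim_vec v"
    hence i: "i < n" using v by simp
    hence "col W 0 $ i = unit_vec n 0 $ i - u $ i" using n cu[OF i] by (simp add: W_def)
    thus "col W 0 $ i = v $ i" using i v by (simp add: u_def)
  qed (use v n in \<open>simp add: W_def\<close>)
  moreover have "transpose_mat W = W" by (rule eq_matI) (auto simp: W_def)
  moreover have "W \<in> carrier_mat n n" by (simp add: W_def)
  ultimately show ?thesis using that by blast
qed

lemma sym_mat_first_col_split:
  fixes C :: "'a :: comm_ring_1 mat"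
  assumes C: "C \<in> carrier_mat (Suc m) (Suc m)" and CT: "transpose_mat C = C"
    and col0: "col C 0 = e \<cdot>\<^sub>v unit_vec (Suc m) 0"
  defines "C' \<equiv> mat m m (\<lambda>(i, j). C $$ (Suc i, Suc j))"
  shows "C = four_block_mat (mat 1 1 (\<lambda>_. e)) (0\<^sub>m 1 m) (0\<^sub>m m 1) C'"
    and "transpose_mat C' = C'"
proof -
  have C0: "C $$ (i, 0) = (if i = 0 then e else 0)" "C $$ (0, i) = (if i = 0 then e else 0)"
    if "i < Suc m" for i
  proof -
    show "C $$ (i, 0) = (if i = 0 then e else 0)"
      using arg_cong[OF col0, of "\<lambda>x. x $ i"] C that by simp
    thus "C $$ (0, i) = (if i = 0 then e else 0)"
      using sym_mat_index_swap[OF C CT, of i 0] that by simp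
  qed
  show "transpose_mat C' = C'"
    using sym_mat_index_swap[OF C CT] unfolding C'_def by (intro eq_matI) auto
  show "C = four_block_mat (mat 1 1 (\<lambda>_. e)) (0\<^sub>m 1 m) (0\<^sub>m m 1) C'"
  proof (rule eq_matI)
    fix i j assume "i < dim_row (four_block_mat (mat 1 1 (\<lambda>_. e)) (0\<^sub>m 1 m) (0\<^sub>m m 1) C')"
      "j < dim_col (four_block_mat (mat 1 1 (\<lambda>_. e)) (0\<^sub>m 1 m) (0\<^sub>m m 1) C')"
    hence i: "i < Suc m" and j: "j < Suc m" by (auto simp: C'_def)
    show "C $$ (i, j) = four_block_mat (mat 1 1 (\<lambda>_. e)) (0\<^sub>m 1 m) (0\<^sub>m m 1) C' $$ (i, j)"
    proof (cases "i = 0 \<or> j = 0")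
      case True
      thus ?thesis using C0 i j by (auto simp: C'_def)
    next
      case False
      then obtain i' j' where "i = Suc i'" "j = Suc j'" by (metis not0_implies_Suc)
      thus ?thesis using i j by (simp add: C'_def)
    qed
  qed (use C in \<open>auto simp: C'_def\<close>)
qed

lemma sym_mat_deflation:
  fixes A :: "real mat"
  assumes A: "A \<in> carrier_mat (Suc m) (Suc m)" and sym: "transpose_mat A = A"
  obtains W e A' where "W \<in> carrier_mat (Suc m) (Suc m)" "transpose_mat W = W" "W * W = 1\<^sub>m (Suc m)"
    "A' \<in> carrier_mat m m" "transpose_mat A' = A'"
    "W * A * W = four_block_mat (mat 1 1 (\<lambda>_. e)) (0\<^sub>m 1 m) (0\<^sub>m m 1) A'"
proof -
  define n where "n = Suc m"
  have A: "A \<in> carrier_mat n n" and n: "0 < n" using A by (simp_all add: n_def)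
  obtain e v where v: "v \<in> carrier_vec n" "v \<bullet> v = 1" and Av: "A *\<^sub>v v = e \<cdot>\<^sub>v v"
    using sym_mat_unit_eigenvector[OF A sym n] by blast
  obtain W where W: "W \<in> carrier_mat n n" and WT: "transpose_mat W = W" and WW: "W * W = 1\<^sub>m n"
    and Wv: "col W 0 = v"
    using sym_involution_with_first_col[OF v n] by blast
  define C where "C = W * A * W"
  have C: "C \<in> carrier_mat n n" using A W unfolding C_def by simp
  have CT: "transpose_mat C = C"
    unfolding C_def using A W
    by (simp add: transpose_mult[of _ n n _ n] WT sym assoc_mult_mat[of _ n n _ n _ n])
  \<comment> \<open>W maps the first unit vector to the eigenvector v, and W is its own inverse.\<close>
  have "col C 0 = (W * A) *\<^sub>v col W 0"
    unfolding C_def using A W n by (intro col_mult2) auto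
  also have "\<dots> = W *\<^sub>v (A *\<^sub>v col W 0)"
    using A W n by (intro assoc_mult_mat_vec) auto
  also have "\<dots> = e \<cdot>\<^sub>v (W *\<^sub>v col W 0)"
    using W v Av Wv by (simp add: mult_mat_vec)
  also have "W *\<^sub>v col W 0 = col (W * W) 0"
    by (rule col_mult2[OF W W n, symmetric])
  finally have "col C 0 = e \<cdot>\<^sub>v unit_vec n 0" unfolding WW using n by simp
  note blocks = sym_mat_first_col_split[OF C[unfolded n_def] CT this[unfolded n_def]]
  show ?thesis
    by (rule that[of W "mat m m (\<lambda>(i, j). C $$ (Suc i, Suc j))" e])
      (use W WT WW blocks in \<open>simp_all add: C_def n_def\<close>)
qed

theorem real_sym_mat_orthogonal_diagonalization:
  fixes A :: "real mat"
  assumes "A \<in> carrier_mat n n" "transpose_mat A = A"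
  shows "\<exists>U D. U \<in> carrier_mat n n \<and> D \<in> carrier_mat n n \<and> diagonal_mat D \<and>
     transpose_mat U * U = 1\<^sub>m n \<and> A = U * D * transpose_mat U"
  using assms
proof (induction n arbitrary: A)
  case 0
  thus ?case by (intro exI[of _ "1\<^sub>m 0"]) (auto intro!: eq_matI simp: diagonal_mat_def)
next
  case (Suc m A)
  let ?n = "Suc m"
  obtain W e A' where W: "W \<in> carrier_mat ?n ?n" "transpose_mat W = W" "W * W = 1\<^sub>m ?n"
    and A': "A' \<in> carrier_mat m m" "transpose_mat A' = A'"
    and WAW: "W * A * W = four_block_mat (mat 1 1 (\<lambda>_. e)) (0\<^sub>m 1 m) (0\<^sub>m m 1) A'"
    using sym_mat_deflation[OF Suc.prems] by blast
  obtain U' D' where U': "U' \<in> carrier_mat m m" "transpose_mat U' * U' = 1\<^sub>m m"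
    and D': "D' \<in> carrier_mat m m" "diagonal_mat D'" and A'_eq: "A' = U' * D' * transpose_mat U'"
    using Suc.IH[OF A'] by blast
  define F where "F = four_block_mat (1\<^sub>m 1) (0\<^sub>m 1 m) (0\<^sub>m m 1) U'"
  define D where "D = four_block_mat (mat 1 1 (\<lambda>_. e)) (0\<^sub>m 1 m) (0\<^sub>m m 1) D'"
  have F: "F \<in> carrier_mat ?n ?n" and D: "D \<in> carrier_mat ?n ?n"
    using U' D' by (auto simp: F_def D_def)
  have FT: "transpose_mat F = four_block_mat (1\<^sub>m 1) (0\<^sub>m 1 m) (0\<^sub>m m 1) (transpose_mat U')"
    unfolding F_def using U' by (subst transpose_four_block_mat) auto
  have FTF: "transpose_mat F * F = 1\<^sub>m ?n"
    unfolding FT unfolding F_def using U'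
    by (subst mult_four_block_mat[of _ 1 1 _ m _ m _ _ 1 _ m]) auto
  have FDF: "F * D * transpose_mat F = W * A * W"
    unfolding FT unfolding F_def D_def WAW A'_eq using U' D'
    by (simp add: mult_four_block_mat[of _ 1 1 _ m _ m _ _ 1 _ m])
  define U where "U = W * F"
  have UT: "transpose_mat U = transpose_mat F * W"
    unfolding U_def using W F by (simp add: transpose_mult[of _ ?n ?n])
  have "transpose_mat U * U = transpose_mat F * (W * W) * F"
    unfolding UT unfolding U_def using W(1) F by (simp add: assoc_mult_mat[of _ ?n ?n _ ?n _ ?n])
  hence UTU: "transpose_mat U * U = 1\<^sub>m ?n" using W F FTF by simp
  have "U * D * transpose_mat U = W * (F * D * transpose_mat F) * W"
    unfolding UT unfolding U_def using W(1) F D by (simp add: assoc_mult_mat[of _ ?n ?n _ ?n _ ?n])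
  also have "\<dots> = (W * W) * A * (W * W)"
    unfolding FDF using W(1) Suc.prems(1) by (simp add: assoc_mult_mat[of _ ?n ?n _ ?n _ ?n])
  finally have "A = U * D * transpose_mat U" using W(3) Suc.prems(1) by simp
  moreover note UTU
  moreover have "diagonal_mat D"
    using D'(2) D'(1) unfolding D_def diagonal_mat_def by auto
  moreover have "U \<in> carrier_mat ?n ?n" using W F by (simp add: U_def)
  ultimately show ?case using D by blast
qed

lemma orthogonal_mat_parseval:
  fixes U :: "real mat"
  assumes U: "U \<in> carrier_mat n n" and UUT: "U * transpose_mat U = 1\<^sub>m n"
    and x: "x \<in> carrier_vec n" and z: "z \<in> carrier_vec n"
  shows "x \<bullet> z = (\<Sum>j<n. (x \<bullet> col U j) * (z \<bullet> col U j))"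
proof -
  have "x \<bullet> z = x \<bullet> (U *\<^sub>v (transpose_mat U *\<^sub>v z))"
    using U z by (simp add: assoc_mult_mat_vec[symmetric, of _ n n _ n] UUT)
  also have "\<dots> = (transpose_mat U *\<^sub>v x) \<bullet> (transpose_mat U *\<^sub>v z)"
    using U x z by (intro transpose_vec_mult_scalar[symmetric]) auto
  also have "\<dots> = (\<Sum>j<n. (x \<bullet> col U j) * (z \<bullet> col U j))"
    using U x z
    by (simp add: scalar_prod_def[of "transpose_mat U *\<^sub>v x"] lessThan_atLeast0 row_transpose
        comm_scalar_prod[of _ n])
  finally show ?thesis .
qed

lemma char_poly_orthogonally_diagonal:
  fixes A :: "real mat"
  assumes U: "U \<in> carrier_mat n n" and D: "D \<in> carrier_mat n n" and dD: "diagonal_mat D"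
    and UTU: "transpose_mat U * U = 1\<^sub>m n" and UUT: "U * transpose_mat U = 1\<^sub>m n"
    and A_eq: "A = U * D * transpose_mat U"
  shows "char_poly A = (\<Prod>a\<leftarrow>diag_mat D. [:- a, 1:])"
proof -
  have "A \<in> carrier_mat n n" using U D A_eq by simp
  hence "similar_mat A D"
    unfolding similar_mat_def similar_mat_wit_def Let_def
    using U D UTU UUT A_eq by (intro exI[of _ U] exI[of _ "transpose_mat U"]) auto
  hence "char_poly A = char_poly D" by (rule char_poly_similar)
  also have "\<dots> = (\<Prod>a\<leftarrow>diag_mat D. [:- a, 1:])"
    using dD D by (intro char_poly_upper_triangular) (auto simp: diagonal_mat_def upper_triangular_def)
  finally show ?thesis .
qed

lemma sym_mat_orthonormal_eigenbasis:
  fixes A :: "real mat"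
  assumes A: "A \<in> carrier_mat n n" and sym: "transpose_mat A = A"
  obtains u \<theta> where "\<And>j. j < n \<Longrightarrow> u j \<in> carrier_vec n \<and> A *\<^sub>v u j = \<theta> j \<cdot>\<^sub>v u j"
    "\<And>i j. i < n \<Longrightarrow> j < n \<Longrightarrow> u i \<bullet> u j = (if i = j then 1 else 0)"
    "\<And>x z. x \<in> carrier_vec n \<Longrightarrow> z \<in> carrier_vec n \<Longrightarrow> x \<bullet> z = (\<Sum>j<n. (x \<bullet> u j) * (z \<bullet> u j))"
    "char_poly A = (\<Prod>\<mu>\<leftarrow>map \<theta> [0..<n]. [:- \<mu>, 1:])"
proof -
  obtain U D where U: "U \<in> carrier_mat n n" and D: "D \<in> carrier_mat n n" and dD: "diagonal_mat D"
    and UTU: "transpose_mat U * U = 1\<^sub>m n" and A_eq: "A = U * D * transpose_mat U"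
    using real_sym_mat_orthogonal_diagonalization[OF A sym] by blast
  have UUT: "U * transpose_mat U = 1\<^sub>m n"
    using mat_mult_left_right_inverse[OF _ U UTU] U by simp
  define \<theta> where "\<theta> j = D $$ (j, j)" for j
  define u where "u j = col U j" for j
  have "A * U = U * D"
    unfolding A_eq using U D UTU by (simp add: assoc_mult_mat[of _ n n _ n _ n])
  have eig: "u j \<in> carrier_vec n \<and> A *\<^sub>v u j = \<theta> j \<cdot>\<^sub>v u j" if j: "j < n" for j
  proof -
    have "A *\<^sub>v u j = col (A * U) j"
      unfolding u_def by (rule col_mult2[OF A U j, symmetric])
    also have "\<dots> = U *\<^sub>v col D j"
      unfolding \<open>A * U = U * D\<close> by (rule col_mult2[OF U D j])
    also have "col D j = \<theta> j \<cdot>\<^sub>v unit_vec n j"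
      using dD D j by (intro eq_vecI) (auto simp: \<theta>_def diagonal_mat_def)
    also have "U *\<^sub>v (\<theta> j \<cdot>\<^sub>v unit_vec n j) = \<theta> j \<cdot>\<^sub>v u j"
      using U j unfolding u_def by (intro eq_vecI) auto
    finally show ?thesis using U j unfolding u_def by simp
  qed
  have orth: "u i \<bullet> u j = (if i = j then 1 else 0)" if "i < n" "j < n" for i j
  proof -
    have "u i \<bullet> u j = (transpose_mat U * U) $$ (i, j)"
      unfolding u_def using U that by (simp add: row_transpose)
    thus ?thesis unfolding UTU using that by simp
  qed
  have parseval: "x \<bullet> z = (\<Sum>j<n. (x \<bullet> u j) * (z \<bullet> u j))"
    if "x \<in> carrier_vec n" "z \<in> carrier_vec n" for x z
    unfolding u_def using orthogonal_mat_parseval[OF U UUT that] .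
  have "char_poly A = (\<Prod>\<mu>\<leftarrow>map \<theta> [0..<n]. [:- \<mu>, 1:])"
    using char_poly_orthogonally_diagonal[OF U D dD UTU UUT A_eq] D
    by (simp add: diag_mat_def \<theta>_def comp_def)
  with eig orth parseval show ?thesis by (rule that)
qed

lemma proots_prod_linear_factors: "proots (\<Prod>\<mu>\<leftarrow>\<mu>s. [:- \<mu>, 1:]) = mset (\<mu>s :: 'a :: idom list)"
proof (induction \<mu>s)
  case (Cons a \<mu>s)
  have "(\<Prod>\<mu>\<leftarrow>\<mu>s. [:- \<mu>, 1:]) \<noteq> 0" by (auto simp: prod_list_zero_iff)
  hence "proots (\<Prod>\<mu>\<leftarrow>a # \<mu>s. [:- \<mu>, 1:]) = proots [:- a, 1:] + proots (\<Prod>\<mu>\<leftarrow>\<mu>s. [:- \<mu>, 1:])"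
    using proots_mult[of "[:- a, 1:]"] by simp
  thus ?case using Cons by simp
qed simp

definition ascending_eigenbasis :: "real mat \<Rightarrow> nat \<Rightarrow> (nat \<Rightarrow> real vec) \<Rightarrow> bool" where
  "ascending_eigenbasis A n v \<longleftrightarrow>
     (\<forall>i<n. v i \<in> carrier_vec n \<and> A *\<^sub>v v i = eig_asc A (Suc i) \<cdot>\<^sub>v v i) \<and>
     (\<forall>i<n. \<forall>j<n. v i \<bullet> v j = (if i = j then 1 else 0)) \<and>
     (\<forall>x\<in>carrier_vec n. \<forall>z\<in>carrier_vec n. x \<bullet> z = (\<Sum>i<n. (x \<bullet> v i) * (z \<bullet> v i)))"

lemma ascending_eigenbasisD:
  assumes "ascending_eigenbasis A n v"
  shows "i < n \<Longrightarrow> v i \<in> carrier_vec n"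
    and "i < n \<Longrightarrow> A *\<^sub>v v i = eig_asc A (Suc i) \<cdot>\<^sub>v v i"
    and "i < n \<Longrightarrow> j < n \<Longrightarrow> v i \<bullet> v j = (if i = j then 1 else 0)"
    and "x \<in> carrier_vec n \<Longrightarrow> z \<in> carrier_vec n \<Longrightarrow> x \<bullet> z = (\<Sum>i<n. (x \<bullet> v i) * (z \<bullet> v i))"
  using assms unfolding ascending_eigenbasis_def by blast+

lemma sym_mat_ascending_eigenbasis:
  fixes A :: "real mat"
  assumes A: "A \<in> carrier_mat n n" and sym: "transpose_mat A = A"
  obtains v where "ascending_eigenbasis A n v"
    "\<And>i j. i \<le> j \<Longrightarrow> j < n \<Longrightarrow> eig_asc A (Suc i) \<le> eig_asc A (Suc j)"
proof -
  obtain u \<theta> where eig: "\<And>j. j < n \<Longrightarrow> u j \<in> carrier_vec n \<and> A *\<^sub>v u j = \<theta> j \<cdot>\<^sub>v u j"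
    and orth: "\<And>i j. i < n \<Longrightarrow> j < n \<Longrightarrow> u i \<bullet> u j = (if i = j then 1 else 0)"
    and parseval: "\<And>x z. x \<in> carrier_vec n \<Longrightarrow> z \<in> carrier_vec n \<Longrightarrow>
       x \<bullet> z = (\<Sum>j<n. (x \<bullet> u j) * (z \<bullet> u j))"
    and cp: "char_poly A = (\<Prod>\<mu>\<leftarrow>map \<theta> [0..<n]. [:- \<mu>, 1:])"
    using sym_mat_orthonormal_eigenbasis[OF A sym] by blast
  define idx where "idx = sort_key \<theta> [0..<n]"
  have idx: "length idx = n" "distinct idx" "set idx = {..<n}"
    unfolding idx_def by auto
  have idx_lt: "idx ! i < n" if "i < n" for i using idx that by (metis lessThan_iff nth_mem)
  have "proots (char_poly A) = mset (map \<theta> idx)"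
    unfolding cp proots_prod_linear_factors idx_def by simp
  moreover have "sorted (map \<theta> idx)" unfolding idx_def by (rule sorted_sort_key)
  ultimately have "sorted_list_of_multiset (proots (char_poly A)) = map \<theta> idx"
    by (metis sorted_list_of_multiset_mset sorted_sort_id)
  hence eig_asc: "eig_asc A (Suc i) = \<theta> (idx ! i)" if "i < n" for i
    unfolding eig_asc_def using idx(1) that by simp
  define v where "v i = u (idx ! i)" for i
  have "v i \<in> carrier_vec n \<and> A *\<^sub>v v i = eig_asc A (Suc i) \<cdot>\<^sub>v v i" if "i < n" for i
    using eig[OF idx_lt[OF that]] eig_asc[OF that] unfolding v_def by simp
  moreover have "v i \<bullet> v j = (if i = j then 1 else 0)" if "i < n" "j < n" for i j
    using orth[OF idx_lt idx_lt] nth_eq_iff_index_eq[OF idx(2)] idx(1) that unfolding v_def by simp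
  moreover have "x \<bullet> z = (\<Sum>i<n. (x \<bullet> v i) * (z \<bullet> v i))"
    if "x \<in> carrier_vec n" "z \<in> carrier_vec n" for x z
  proof -
    have "(\<Sum>i<n. (x \<bullet> v i) * (z \<bullet> v i)) = (\<Sum>j\<leftarrow>idx. (x \<bullet> u j) * (z \<bullet> u j))"
      unfolding v_def by (simp add: sum_list_sum_nth idx(1) lessThan_atLeast0)
    also have "\<dots> = (\<Sum>j\<in>set idx. (x \<bullet> u j) * (z \<bullet> u j))"
      by (rule sum_list_distinct_conv_sum_set[OF idx(2)])
    finally show ?thesis using parseval[OF that] idx(3) by simp
  qed
  ultimately have "ascending_eigenbasis A n v" unfolding ascending_eigenbasis_def by blast
  moreover have "eig_asc A (Suc i) \<le> eig_asc A (Suc j)" if "i \<le> j" "j < n" for i j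
    using sorted_nth_mono[OF \<open>sorted (map \<theta> idx)\<close>, of i j] eig_asc idx(1) that by simp
  ultimately show ?thesis by (rule that)
qed

lemma right_inverse_imp_dim_le:
  fixes X :: "'a :: field mat"
  assumes X: "X \<in> carrier_mat a b" and Y: "Y \<in> carrier_mat b a" and XY: "X * Y = 1\<^sub>m a"
  shows "a \<le> b"
proof (rule ccontr)
  assume "\<not> a \<le> b"
  hence ba: "b < a" by simp
  \<comment> \<open>Pad X and Y with zeros to square matrices; then the padded Y has a zero last row.\<close>
  define X' where "X' = mat a a (\<lambda>(i, j). if j < b then X $$ (i, j) else 0)"
  define Y' where "Y' = mat a a (\<lambda>(i, j). if i < b then Y $$ (i, j) else 0)"
  have X': "X' \<in> carrier_mat a a" and Y': "Y' \<in> carrier_mat a a" unfolding X'_def Y'_def by auto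
  have "X' * Y' = 1\<^sub>m a"
  proof (rule eq_matI)
    fix i j assume "i < dim_row (1\<^sub>m a)" "j < dim_col (1\<^sub>m a)"
    hence i: "i < a" and j: "j < a" by auto
    have "(X' * Y') $$ (i, j) = (\<Sum>l\<in>{0..<a}. if l < b then X $$ (i, l) * Y $$ (l, j) else 0)"
      using i j unfolding X'_def Y'_def by (auto simp: scalar_prod_def intro!: sum.cong)
    also have "\<dots> = (\<Sum>l\<in>{0..<b}. X $$ (i, l) * Y $$ (l, j))"
      using ba by (subst sum.mono_neutral_right[of "{0..<a}" "{0..<b}"]) auto
    also have "\<dots> = (X * Y) $$ (i, j)" using X Y i j by (simp add: scalar_prod_def)
    finally show "(X' * Y') $$ (i, j) = 1\<^sub>m a $$ (i, j)" unfolding XY .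
  qed (use X' Y' in auto)
  hence "Y' * X' = 1\<^sub>m a" using mat_mult_left_right_inverse[OF X' Y'] by blast
  moreover have "\<not> a - 1 < b" using ba by linarith
  hence "(Y' * X') $$ (a - 1, a - 1) = 0"
    using ba unfolding Y'_def X'_def by (simp add: scalar_prod_def)
  ultimately show False using ba by simp
qed

section \<open>Laplacians of block-constant weight matrices\<close>

locale block_laplacian =
  fixes n k :: nat and cl :: "nat \<Rightarrow> nat" and B :: "real mat"
  assumes k_less_n: "k < n" and cl_less: "\<forall>i<n. cl i < k"
    and blk_nonempty: "\<forall>a<k. blk n cl a \<noteq> {}"
    and B_carrier: "B \<in> carrier_mat k k"
    and B_sym: "\<forall>a<k. \<forall>b<k. B $$ (a, b) = B $$ (b, a)"
    and B_nonneg: "\<forall>a<k. \<forall>b<k. 0 \<le> B $$ (a, b)"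
begin

definition P :: "real mat" where
  "P = partition_mat n k cl"

definition A :: "real mat" where
  "A = P * B * transpose_mat P"

definition L :: "real mat" where
  "L = mat n n (\<lambda>(i, j). if i = j then (A *\<^sub>v vec n (\<lambda>_. 1)) $ i else 0) - A"

definition block_size :: "nat \<Rightarrow> nat" where
  "block_size a = card (blk n cl a)"

definition deg :: "nat \<Rightarrow> real" where
  "deg a = (\<Sum>l<k. B $$ (a, l) * real (block_size l))"

definition block_sum :: "real vec \<Rightarrow> nat \<Rightarrow> real" where
  "block_sum w a = (\<Sum>i\<in>blk n cl a. w $ i)"

definition cross :: "nat \<Rightarrow> real" where
  "cross a = (\<Sum>l\<in>{..<k} - {a}. B $$ (a, l))"

definition deg_min :: real where
  "deg_min = (MIN a\<in>{..<k}. deg a)"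

definition cross_bound :: real where
  "cross_bound = 2 * real (MAX a\<in>{..<k}. block_size a) * (MAX a\<in>{..<k}. cross a)"

lemma k_pos: "0 < k"
  using k_less_n cl_less by (metis gr_zeroI less_nat_zero_code)

lemma block_size_pos: "a < k \<Longrightarrow> 0 < block_size a"
  using blk_nonempty unfolding block_size_def blk_def by (simp add: card_gt_0_iff)

lemma sum_by_blocks: "(\<Sum>i<n. h i) = (\<Sum>a<k. \<Sum>i\<in>blk n cl a. h i)"
proof -
  have "(\<Sum>a<k. \<Sum>i\<in>{i \<in> {..<n}. cl i = a}. h i) = (\<Sum>i<n. h i)"
    using cl_less by (intro sum.group) auto
  moreover have "{i \<in> {..<n}. cl i = a} = blk n cl a" for a unfolding blk_def by auto
  ultimately show ?thesis by simp
qed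

lemma sum_by_blocks_cl: "(\<Sum>i<n. f (cl i)) = (\<Sum>a<k. real (block_size a) * f a)"
proof -
  have "(\<Sum>i<n. f (cl i)) = (\<Sum>a<k. \<Sum>i\<in>blk n cl a. f a)"
    unfolding sum_by_blocks by (intro sum.cong refl) (simp add: blk_def)
  thus ?thesis by (simp add: block_size_def)
qed

lemma P_carrier: "P \<in> carrier_mat n k"
  unfolding P_def partition_mat_def by simp

lemma sum_cl_delta: "i < n \<Longrightarrow> (\<Sum>a<k. (if cl i = a then 1 else 0) * f a) = (f (cl i) :: real)"
  using cl_less by (simp add: if_distrib[of "\<lambda>x. x * _"] cong: if_cong)

lemma P_mult_vec: "y \<in> carrier_vec k \<Longrightarrow> i < n \<Longrightarrow> (P *\<^sub>v y) $ i = y $ cl i"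
  using P_carrier
  by (simp add: scalar_prod_def lessThan_atLeast0[symmetric] P_def partition_mat_def sum_cl_delta)

lemma A_index: assumes i: "i < n" and j: "j < n" shows "A $$ (i, j) = B $$ (cl i, cl j)"
proof -
  have "(P * B) $$ (i, m) = B $$ (cl i, m)" if "m < k" for m
    using P_carrier B_carrier i that
    by (simp add: scalar_prod_def lessThan_atLeast0[symmetric] P_def partition_mat_def sum_cl_delta)
  hence "A $$ (i, j) = (\<Sum>m<k. B $$ (cl i, m) * (if cl j = m then 1 else 0))"
    unfolding A_def using P_carrier B_carrier i j
    by (simp add: scalar_prod_def lessThan_atLeast0[symmetric] P_def partition_mat_def)
  also have "\<dots> = B $$ (cl i, cl j)"
    using sum_cl_delta[OF j, of "\<lambda>m. B $$ (cl i, m)"] by (simp add: mult.commute)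
  finally show ?thesis .
qed

lemma A_carrier: "A \<in> carrier_mat n n"
  unfolding A_def using P_carrier B_carrier by simp

lemma A_row_sum: "i < n \<Longrightarrow> (A *\<^sub>v vec n (\<lambda>_. 1)) $ i = deg (cl i)"
  using A_carrier sum_by_blocks_cl[of "\<lambda>l. B $$ (cl i, l)"]
  by (simp add: scalar_prod_def lessThan_atLeast0[symmetric] A_index deg_def mult.commute)

lemma L_carrier: "L \<in> carrier_mat n n"
  unfolding L_def by (rule minus_carrier_mat[OF A_carrier])

lemma L_index:
  "i < n \<Longrightarrow> j < n \<Longrightarrow> L $$ (i, j) = (if i = j then deg (cl i) else 0) - B $$ (cl i, cl j)"
  unfolding L_def using A_carrier A_row_sum by (simp add: A_index)

lemma L_sym: "transpose_mat L = L"
  using L_carrier cl_less B_sym by (intro eq_matI) (auto simp: L_index)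

lemma L_mult_vec:
  assumes w: "w \<in> carrier_vec n" and i: "i < n"
  shows "(L *\<^sub>v w) $ i = deg (cl i) * w $ i - (\<Sum>a<k. B $$ (cl i, a) * block_sum w a)"
proof -
  have "(L *\<^sub>v w) $ i = (\<Sum>j<n. ((if i = j then deg (cl i) else 0) - B $$ (cl i, cl j)) * w $ j)"
    using L_carrier i w by (simp add: scalar_prod_def lessThan_atLeast0[symmetric] L_index)
  also have "\<dots> = deg (cl i) * w $ i - (\<Sum>j<n. B $$ (cl i, cl j) * w $ j)"
    using i by (simp add: algebra_simps sum_subtractf if_distrib[of "\<lambda>x. x * _"]
        if_distrib[of "\<lambda>x. _ * x"] cong: if_cong)
  also have "(\<Sum>j<n. B $$ (cl i, cl j) * w $ j) = (\<Sum>a<k. B $$ (cl i, a) * block_sum w a)"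
    unfolding sum_by_blocks block_sum_def sum_distrib_left
    by (intro sum.cong refl) (simp add: blk_def)
  finally show ?thesis .
qed

lemma deg_min_le: "a < k \<Longrightarrow> deg_min \<le> deg a"
  unfolding deg_min_def by simp

lemma cross_nonneg: "a < k \<Longrightarrow> 0 \<le> cross a"
  unfolding cross_def using B_nonneg by (auto intro!: sum_nonneg)

lemma cross_Max_nonneg: "0 \<le> (MAX a\<in>{..<k}. cross a)"
proof -
  have "cross 0 \<le> (MAX a\<in>{..<k}. cross a)" using k_pos by simp
  thus ?thesis using cross_nonneg[OF k_pos] by linarith
qed

lemma cross_bound_nonneg: "0 \<le> cross_bound"
  unfolding cross_bound_def using cross_Max_nonneg by simp

lemma block_sum_eigen:
  assumes w: "w \<in> carrier_vec n" and eig: "L *\<^sub>v w = \<theta> \<cdot>\<^sub>v w" and a: "a < k"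
  shows "deg a * block_sum w a - real (block_size a) * (\<Sum>l<k. B $$ (a, l) * block_sum w l)
    = \<theta> * block_sum w a"
proof -
  have "(\<Sum>i\<in>blk n cl a. (L *\<^sub>v w) $ i) = \<theta> * block_sum w a"
    unfolding eig block_sum_def sum_distrib_left using w by (intro sum.cong) (auto simp: blk_def)
  moreover have "(\<Sum>i\<in>blk n cl a. (L *\<^sub>v w) $ i)
      = (\<Sum>i\<in>blk n cl a. deg a * w $ i - (\<Sum>l<k. B $$ (a, l) * block_sum w l))"
    by (intro sum.cong) (auto simp: blk_def L_mult_vec[OF w])
  ultimately show ?thesis
    unfolding block_sum_def block_size_def by (simp add: sum_subtractf sum_distrib_left)
qed

lemma eigvec_block_constant:
  assumes w: "w \<in> carrier_vec n" and eig: "L *\<^sub>v w = \<theta> \<cdot>\<^sub>v w" and below: "\<theta> < deg_min"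
  shows "\<exists>y\<in>carrier_vec k. w = P *\<^sub>v y"
proof
  define y where "y = vec k (\<lambda>a. (\<Sum>l<k. B $$ (a, l) * block_sum w l) / (deg a - \<theta>))"
  show "y \<in> carrier_vec k" by (simp add: y_def)
  show "w = P *\<^sub>v y"
  proof (rule eq_vecI)
    fix i assume "i < dim_vec (P *\<^sub>v y)"
    hence i: "i < n" and ci: "cl i < k" using P_carrier cl_less by auto
    have "deg (cl i) * w $ i - (\<Sum>l<k. B $$ (cl i, l) * block_sum w l) = \<theta> * w $ i"
      using L_mult_vec[OF w i] eig w i by simp
    moreover have "deg (cl i) - \<theta> > 0" using deg_min_le[OF ci] below by simp
    ultimately have "w $ i = (\<Sum>l<k. B $$ (cl i, l) * block_sum w l) / (deg (cl i) - \<theta>)"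
      by (simp add: field_simps)
    thus "w $ i = (P *\<^sub>v y) $ i" using P_mult_vec[of y i] i ci by (simp add: y_def)
  qed (use w P_carrier in simp)
qed

lemma eigvec_max_block_sum_bound:
  assumes w: "w \<in> carrier_vec n" and eig: "L *\<^sub>v w = \<theta> \<cdot>\<^sub>v w" and \<theta>: "0 \<le> \<theta>"
    and a: "a < k" and a_max: "\<And>l. l < k \<Longrightarrow> \<bar>block_sum w l\<bar> \<le> \<bar>block_sum w a\<bar>"
  shows "\<theta> * \<bar>block_sum w a\<bar> \<le> cross_bound * \<bar>block_sum w a\<bar>"
proof -
  let ?s = "block_sum w"
  let ?nmax = "real (MAX l\<in>{..<k}. block_size l)"
  have nmax: "real (block_size l) \<le> ?nmax" if "l < k" for l using that by simp
  define S1 where "S1 = (\<Sum>l\<in>{..<k} - {a}. B $$ (a, l) * real (block_size l))"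
  define S2 where "S2 = (\<Sum>l\<in>{..<k} - {a}. B $$ (a, l) * ?s l)"
  have "deg a = B $$ (a, a) * real (block_size a) + S1"
    unfolding deg_def S1_def using a by (simp add: sum.remove)
  moreover have "(\<Sum>l<k. B $$ (a, l) * ?s l) = B $$ (a, a) * ?s a + S2"
    unfolding S2_def using a by (simp add: sum.remove)
  ultimately have "\<theta> * ?s a = S1 * ?s a - real (block_size a) * S2"
    using block_sum_eigen[OF w eig a] by (simp add: algebra_simps)
  \<comment> \<open>The diagonal block cancels; only the cross-block weights remain.\<close>
  hence "\<bar>\<theta> * ?s a\<bar> \<le> \<bar>S1 * ?s a\<bar> + \<bar>real (block_size a) * S2\<bar>"
    by (simp only: abs_triangle_ineq4)
  hence "\<theta> * \<bar>?s a\<bar> \<le> \<bar>S1\<bar> * \<bar>?s a\<bar> + real (block_size a) * \<bar>S2\<bar>"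
    using \<theta> by (simp add: abs_mult)
  also have "\<dots> \<le> ?nmax * cross a * \<bar>?s a\<bar> + ?nmax * (cross a * \<bar>?s a\<bar>)"
  proof (rule add_mono)
    have "\<bar>S1\<bar> \<le> ?nmax * cross a"
      unfolding S1_def cross_def sum_distrib_left using B_nonneg nmax a
      by (subst abs_of_nonneg) (auto intro!: sum_nonneg sum_mono mult_left_mono simp: mult.commute)
    thus "\<bar>S1\<bar> * \<bar>?s a\<bar> \<le> ?nmax * cross a * \<bar>?s a\<bar>" by (simp add: mult_right_mono)
    have "\<bar>S2\<bar> \<le> (\<Sum>l\<in>{..<k} - {a}. B $$ (a, l) * \<bar>?s a\<bar>)"
      unfolding S2_def using B_nonneg a a_max
      by (intro order.trans[OF sum_abs] sum_mono) (auto simp: abs_mult intro!: mult_left_mono)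
    hence "\<bar>S2\<bar> \<le> cross a * \<bar>?s a\<bar>" unfolding cross_def by (simp add: sum_distrib_right)
    thus "real (block_size a) * \<bar>S2\<bar> \<le> ?nmax * (cross a * \<bar>?s a\<bar>)"
      using nmax[OF a] by (intro mult_mono) auto
  qed
  also have "\<dots> = 2 * ?nmax * cross a * \<bar>?s a\<bar>" by (simp add: algebra_simps)
  also have "\<dots> \<le> cross_bound * \<bar>?s a\<bar>"
    unfolding cross_bound_def using a by (intro mult_right_mono mult_left_mono) auto
  finally show ?thesis .
qed

lemma eigvec_block_sums_vanish:
  assumes w: "w \<in> carrier_vec n" and eig: "L *\<^sub>v w = \<theta> \<cdot>\<^sub>v w" and above: "cross_bound < \<theta>"
    and l: "l < k"
  shows "block_sum w l = 0"
proof -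
  let ?s = "block_sum w"
  have "(MAX l\<in>{..<k}. \<bar>?s l\<bar>) \<in> (\<lambda>l. \<bar>?s l\<bar>) ` {..<k}"
    using k_pos by (intro Max_in) auto
  then obtain a where a: "a < k" and a_Max: "(MAX l\<in>{..<k}. \<bar>?s l\<bar>) = \<bar>?s a\<bar>" by auto
  have a_max: "\<bar>?s l\<bar> \<le> \<bar>?s a\<bar>" if "l < k" for l
    unfolding a_Max[symmetric] using that by simp
  have "\<theta> * \<bar>?s a\<bar> \<le> cross_bound * \<bar>?s a\<bar>"
    using eigvec_max_block_sum_bound[OF w eig _ a a_max] above cross_bound_nonneg by simp
  hence "\<bar>?s a\<bar> = 0"
    using above mult_strict_right_mono[OF above, of "\<bar>?s a\<bar>"] by fastforce
  thus ?thesis using a_max[OF l] by simp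
qed

lemma eigenvalue_outside_gap:
  assumes w: "w \<in> carrier_vec n" "w \<noteq> 0\<^sub>v n" and eig: "L *\<^sub>v w = \<theta> \<cdot>\<^sub>v w"
  shows "\<theta> \<le> cross_bound \<or> deg_min \<le> \<theta>"
proof (rule ccontr)
  assume "\<not> (\<theta> \<le> cross_bound \<or> deg_min \<le> \<theta>)"
  hence gap: "cross_bound < \<theta>" "\<theta> < deg_min" by auto
  obtain i where i: "i < n" and wi: "w $ i \<noteq> 0" using w by (metis eq_vecI carrier_vecD index_zero_vec)
  have "(L *\<^sub>v w) $ i = deg (cl i) * w $ i"
    using L_mult_vec[OF w(1) i] eigvec_block_sums_vanish[OF w(1) eig gap(1)] by simp
  hence "deg (cl i) * w $ i = \<theta> * w $ i" using eig w(1) i by (metis carrier_vecD index_smult_vec(1))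
  thus False using wi deg_min_le[of "cl i"] cl_less i gap(2) by simp
qed

lemma inner_P_mult_vec:
  assumes y: "y \<in> carrier_vec k" and z: "z \<in> carrier_vec k"
  shows "(P *\<^sub>v y) \<bullet> (P *\<^sub>v z) = (\<Sum>a<k. real (block_size a) * (y $ a * z $ a))"
proof -
  have "(P *\<^sub>v y) \<bullet> (P *\<^sub>v z) = (\<Sum>i<n. (P *\<^sub>v y) $ i * (P *\<^sub>v z) $ i)"
    using P_carrier by (simp add: scalar_prod_def lessThan_atLeast0)
  also have "\<dots> = (\<Sum>i<n. y $ cl i * z $ cl i)" using y z by (simp add: P_mult_vec)
  also have "\<dots> = (\<Sum>a<k. real (block_size a) * (y $ a * z $ a))"
    by (rule sum_by_blocks_cl)
  finally show ?thesis .
qed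

lemma orthonormal_block_constant_gram:
  assumes ys: "\<And>i. i < m \<Longrightarrow> ys i \<in> carrier_vec k"
    and orth: "\<And>i j. i < m \<Longrightarrow> j < m \<Longrightarrow> (P *\<^sub>v ys i) \<bullet> (P *\<^sub>v ys j) = (if i = j then 1 else 0)"
  shows "mat m k (\<lambda>(i, a). real (block_size a) * ys i $ a) * mat k m (\<lambda>(a, j). ys j $ a) = 1\<^sub>m m"
proof (rule eq_matI)
  fix i j assume "i < dim_row (1\<^sub>m m :: real mat)" "j < dim_col (1\<^sub>m m :: real mat)"
  hence i: "i < m" and j: "j < m" by auto
  have "(mat m k (\<lambda>(i, a). real (block_size a) * ys i $ a) * mat k m (\<lambda>(a, j). ys j $ a)) $$ (i, j)
      = (\<Sum>a<k. real (block_size a) * (ys i $ a * ys j $ a))"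
    using i j by (simp add: scalar_prod_def lessThan_atLeast0 mult.assoc)
  also have "\<dots> = (P *\<^sub>v ys i) \<bullet> (P *\<^sub>v ys j)" using i j ys by (simp add: inner_P_mult_vec)
  finally show "(mat m k (\<lambda>(i, a). real (block_size a) * ys i $ a) * mat k m (\<lambda>(a, j). ys j $ a)) $$ (i, j)
      = 1\<^sub>m m $$ (i, j)" using orth i j by simp
qed auto

definition block_indicator :: "nat \<Rightarrow> real vec" where
  "block_indicator a = vec n (\<lambda>i. if cl i = a then 1 else 0)"

lemma block_indicator_carrier: "block_indicator a \<in> carrier_vec n"
  unfolding block_indicator_def by simp

lemma block_indicator_inner: "w \<in> carrier_vec n \<Longrightarrow> block_indicator a \<bullet> w = block_sum w a"
  unfolding block_indicator_def block_sum_def blk_def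
  by (simp add: scalar_prod_def sum.inter_filter[symmetric] if_distrib[of "\<lambda>x. x * _"] cong: if_cong)

lemma block_indicator_orthogonal:
  "block_indicator a \<bullet> block_indicator b = (if a = b then real (block_size a) else 0)"
  unfolding block_indicator_inner[OF block_indicator_carrier] block_sum_def block_size_def
  by (simp add: block_indicator_def blk_def)

lemma L_ascending_eigenbasis:
  obtains v where "ascending_eigenbasis L n v"
    "\<And>i j. i \<le> j \<Longrightarrow> j < n \<Longrightarrow> eig_asc L (Suc i) \<le> eig_asc L (Suc j)"
  using sym_mat_ascending_eigenbasis[OF L_carrier L_sym] by blast

lemma low_eigenvectors_factor_through_P:
  assumes eb: "ascending_eigenbasis L n v" and m: "m \<le> n"
    and low: "\<And>i. i < m \<Longrightarrow> eig_asc L (Suc i) < deg_min"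
  obtains S X where "S \<in> carrier_mat k m" "X \<in> carrier_mat m k" "X * S = 1\<^sub>m m"
    "mat_of_cols n (map v [0..<m]) = P * S"
proof -
  have "\<forall>i\<in>{..<m}. \<exists>y. y \<in> carrier_vec k \<and> v i = P *\<^sub>v y"
  proof
    fix i assume "i \<in> {..<m}"
    hence "i < n" "i < m" using m by auto
    thus "\<exists>y. y \<in> carrier_vec k \<and> v i = P *\<^sub>v y"
      using eigvec_block_constant[OF ascending_eigenbasisD(1,2)[OF eb] low] by blast
  qed
  from bchoice[OF this] obtain ys where "\<forall>i\<in>{..<m}. ys i \<in> carrier_vec k \<and> v i = P *\<^sub>v ys i"
    by blast
  hence ys: "\<And>i. i < m \<Longrightarrow> ys i \<in> carrier_vec k"
    and v_ys: "\<And>i. i < m \<Longrightarrow> v i = P *\<^sub>v ys i" by auto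
  define S where "S = mat k m (\<lambda>(a, j). ys j $ a)"
  define X where "X = mat m k (\<lambda>(i, a). real (block_size a) * ys i $ a)"
  have "(P *\<^sub>v ys i) \<bullet> (P *\<^sub>v ys j) = (if i = j then 1 else 0)" if "i < m" "j < m" for i j
  proof -
    have "v i \<bullet> v j = (if i = j then 1 else 0)"
      using ascending_eigenbasisD(3)[OF eb] that m by simp
    thus ?thesis using v_ys that by simp
  qed
  hence XS: "X * S = 1\<^sub>m m"
    unfolding X_def S_def using ys by (rule orthonormal_block_constant_gram[rotated])
  have cols: "mat_of_cols n (map v [0..<m]) = P * S"
  proof (rule eq_matI)
    fix i j assume "i < dim_row (P * S)" "j < dim_col (P * S)"
    hence i: "i < n" and j: "j < m" using P_carrier by (auto simp: S_def)
    have "col S j = ys j" using ys[OF j] j unfolding S_def by (intro eq_vecI) auto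
    hence "(P * S) $$ (i, j) = (P *\<^sub>v ys j) $ i" using P_carrier i j by (simp add: S_def)
    thus "mat_of_cols n (map v [0..<m]) $$ (i, j) = (P * S) $$ (i, j)"
      using i j v_ys[OF j] by (simp add: mat_of_cols_index)
  qed (use P_carrier in \<open>auto simp: S_def\<close>)
  show ?thesis by (rule that[OF _ _ XS cols]) (simp_all add: S_def X_def)
qed

lemma diag_block_size_factor_dim_le:
  assumes gram: "\<And>a b. a < k \<Longrightarrow> b < k \<Longrightarrow>
    (if a = b then real (block_size a) else 0) = (\<Sum>i<m. C a i * C b i)"
  shows "k \<le> m"
proof -
  have "mat k m (\<lambda>(a, i). C a i / real (block_size a)) * mat m k (\<lambda>(i, b). C b i) = 1\<^sub>m k"
  proof (rule eq_matI)
    fix a b assume "a < dim_row (1\<^sub>m k :: real mat)" "b < dim_col (1\<^sub>m k :: real mat)"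
    hence a: "a < k" and b: "b < k" by auto
    have "(mat k m (\<lambda>(a, i). C a i / real (block_size a)) * mat m k (\<lambda>(i, b). C b i)) $$ (a, b)
        = (\<Sum>i<m. C a i * C b i) / real (block_size a)"
      using a b by (simp add: scalar_prod_def lessThan_atLeast0[symmetric] sum_divide_distrib)
    thus "(mat k m (\<lambda>(a, i). C a i / real (block_size a)) * mat m k (\<lambda>(i, b). C b i)) $$ (a, b)
        = 1\<^sub>m k $$ (a, b)"
      unfolding gram[OF a b, symmetric] using a b block_size_pos[OF a] by auto
  qed auto
  thus ?thesis by (rule right_inverse_imp_dim_le[rotated 2]) auto
qed

lemma eig_asc_k_le_cross_bound: "eig_asc L k \<le> cross_bound"
proof (rule ccontr)
  assume "\<not> eig_asc L k \<le> cross_bound"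
  obtain v where eb: "ascending_eigenbasis L n v"
    and mono: "\<And>i j. i \<le> j \<Longrightarrow> j < n \<Longrightarrow> eig_asc L (Suc i) \<le> eig_asc L (Suc j)"
    using L_ascending_eigenbasis by blast
  have k: "Suc (k - 1) = k" using k_pos by simp
  have high: "cross_bound < eig_asc L (Suc i)" if "k - 1 \<le> i" "i < n" for i
    using mono[OF that] k \<open>\<not> eig_asc L k \<le> cross_bound\<close> by simp
  define C where "C a i = block_indicator a \<bullet> v i" for a i
  note v = ascending_eigenbasisD(1,2)[OF eb]
  \<comment> \<open>The high eigenvectors are orthogonal to all block indicators, so the k indicators
    lie in the span of the first k - 1 eigenvectors.\<close>
  have C0: "C a i = 0" if "k - 1 \<le> i" "i < n" "a < k" for a i
    unfolding C_def block_indicator_inner[OF v(1)[OF that(2)]]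
    using eigvec_block_sums_vanish[OF v[OF that(2)] high[OF that(1,2)] that(3)] .
  have gram: "(if a = b then real (block_size a) else 0) = (\<Sum>i<k - 1. C a i * C b i)"
    if "a < k" "b < k" for a b
  proof -
    have "(if a = b then real (block_size a) else 0) = (\<Sum>i<n. C a i * C b i)"
      unfolding block_indicator_orthogonal[symmetric] C_def
      by (intro ascending_eigenbasisD(4)[OF eb] block_indicator_carrier)
    also have "\<dots> = (\<Sum>i<k - 1. C a i * C b i)"
      using k_less_n C0 that by (intro sum.mono_neutral_right) auto
    finally show ?thesis .
  qed
  hence "k \<le> k - 1" by (rule diag_block_size_factor_dim_le)
  thus False using k_pos by simp
qed

lemma deg_min_le_eig_asc_Suc_k:
  assumes gap: "cross_bound < deg_min"
  shows "deg_min \<le> eig_asc L (Suc k)"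
proof -
  obtain v where eb: "ascending_eigenbasis L n v"
    and mono: "\<And>i j. i \<le> j \<Longrightarrow> j < n \<Longrightarrow> eig_asc L (Suc i) \<le> eig_asc L (Suc j)"
    using L_ascending_eigenbasis by blast
  have "cross_bound < eig_asc L (Suc k)"
  proof (rule ccontr)
    assume "\<not> cross_bound < eig_asc L (Suc k)"
    hence low: "eig_asc L (Suc i) < deg_min" if "i < Suc k" for i
      using mono[of i k] that k_less_n gap by fastforce
    obtain S X :: "real mat" where "S \<in> carrier_mat k (Suc k)" "X \<in> carrier_mat (Suc k) k"
      "X * S = 1\<^sub>m (Suc k)"
      using low_eigenvectors_factor_through_P[OF eb Suc_leI[OF k_less_n] low] by blast
    hence "Suc k \<le> k" by (intro right_inverse_imp_dim_le)
    thus False by simp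
  qed
  moreover have "v k \<noteq> 0\<^sub>v n"
    using ascending_eigenbasisD(3)[OF eb k_less_n k_less_n] by auto
  moreover note ascending_eigenbasisD(1,2)[OF eb k_less_n]
  ultimately show ?thesis using eigenvalue_outside_gap by fastforce
qed

lemma block_ideal_L:
  assumes gap: "cross_bound < deg_min"
  shows "block_ideal n k cl L"
proof -
  obtain v where eb: "ascending_eigenbasis L n v"
    and mono: "\<And>i j. i \<le> j \<Longrightarrow> j < n \<Longrightarrow> eig_asc L (Suc i) \<le> eig_asc L (Suc j)"
    using L_ascending_eigenbasis by blast
  have low: "eig_asc L (Suc i) < deg_min" if "i < k" for i
    using mono[of i "k - 1"] that k_less_n k_pos eig_asc_k_le_cross_bound gap by fastforce
  obtain S X where S: "S \<in> carrier_mat k k" and X: "X \<in> carrier_mat k k" and XS: "X * S = 1\<^sub>m k"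
    and cols: "mat_of_cols n (map v [0..<k]) = P * S"
    using low_eigenvectors_factor_through_P[OF eb less_imp_le[OF k_less_n] low] by blast
  have "invertible_mat S"
    using S X XS mat_mult_left_right_inverse[OF X S XS]
    unfolding invertible_mat_def inverts_mat_def by auto
  thus ?thesis
    using ascending_eigenbasisD(1-3)[OF eb] S cols k_less_n unfolding block_ideal_def P_def
    by (intro exI[of _ v] exI[of _ S]) simp
qed

lemma block_size_Min_pos: "0 < (MIN a\<in>{..<k}. block_size a)"
proof -
  have "(MIN a\<in>{..<k}. block_size a) \<in> block_size ` {..<k}" using k_pos by (intro Min_in) auto
  thus ?thesis using block_size_pos by auto
qed

lemma deg_min_ge_row_sum_min:
  "(MIN a\<in>{..<k}. (B *\<^sub>v vec k (\<lambda>_. 1)) $ a) * real (MIN a\<in>{..<k}. block_size a) \<le> deg_min"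
proof -
  let ?bmin = "MIN a\<in>{..<k}. (B *\<^sub>v vec k (\<lambda>_. 1)) $ a"
  let ?nmin = "real (MIN a\<in>{..<k}. block_size a)"
  have "?bmin * ?nmin \<le> deg a" if a: "a < k" for a
  proof -
    have "?bmin \<le> (\<Sum>l<k. B $$ (a, l))"
      using Min_le[of "(\<lambda>a. (B *\<^sub>v vec k (\<lambda>_. 1)) $ a) ` {..<k}"] a B_carrier
      by (simp add: scalar_prod_def lessThan_atLeast0)
    hence "?bmin * ?nmin \<le> (\<Sum>l<k. B $$ (a, l)) * ?nmin"
      by (rule mult_right_mono) simp
    also have "\<dots> = (\<Sum>l<k. B $$ (a, l) * ?nmin)" by (simp add: sum_distrib_right)
    also have "\<dots> \<le> deg a"
      unfolding deg_def using B_nonneg a by (intro sum_mono mult_left_mono) auto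
    finally show ?thesis .
  qed
  thus ?thesis unfolding deg_min_def using k_pos by (subst Min_ge_iff) auto
qed

lemma spectral_gap_ge:
  assumes ratio: "real (MAX a\<in>{..<k}. block_size a) / real (MIN a\<in>{..<k}. block_size a) \<le> \<rho>"
    and dominance: "(MIN a\<in>{..<k}. B $$ (a, a)) - 2 * \<rho> * (MAX a\<in>{..<k}. cross a) \<ge> \<Delta>"
  shows "\<Delta> * real (MIN a\<in>{..<k}. block_size a) \<le> deg_min - cross_bound"
proof -
  let ?nmin = "real (MIN a\<in>{..<k}. block_size a)"
  let ?Bmin = "MIN a\<in>{..<k}. B $$ (a, a)"
  have nmin_pos: "0 < ?nmin" using block_size_Min_pos by simp
  have "?Bmin * ?nmin \<le> deg a" if a: "a < k" for a
  proof -
    have "?Bmin * ?nmin \<le> B $$ (a, a) * real (block_size a)"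
      using a B_nonneg nmin_pos by (intro mult_mono) auto
    also have "\<dots> \<le> deg a"
      unfolding deg_def using B_nonneg a
      by (intro member_le_sum[of a "{..<k}" "\<lambda>l. B $$ (a, l) * real (block_size l)"]) auto
    finally show ?thesis .
  qed
  hence "?Bmin * ?nmin \<le> deg_min" unfolding deg_min_def using k_pos by (subst Min_ge_iff) auto
  moreover have "cross_bound \<le> 2 * \<rho> * (MAX a\<in>{..<k}. cross a) * ?nmin"
  proof -
    have "real (MAX a\<in>{..<k}. block_size a) \<le> \<rho> * ?nmin"
      using ratio nmin_pos by (simp add: field_simps)
    hence "cross_bound \<le> 2 * (\<rho> * ?nmin) * (MAX a\<in>{..<k}. cross a)"
      unfolding cross_bound_def using cross_Max_nonneg by (intro mult_right_mono) auto
    thus ?thesis by (simp add: algebra_simps)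
  qed
  moreover have "\<Delta> * ?nmin \<le> (?Bmin - 2 * \<rho> * (MAX a\<in>{..<k}. cross a)) * ?nmin"
    using dominance nmin_pos by (simp add: mult_right_mono)
  ultimately show ?thesis by (simp add: algebra_simps)
qed

end

theorem lemma9:
  fixes n k :: nat and cl :: "nat \<Rightarrow> nat" and Q W :: "real mat" and \<rho> \<Delta> :: real
  defines "B \<equiv> mat k k (\<lambda>(i, j). Q $$ (i, j) * W $$ (i, j))"
  defines "P \<equiv> partition_mat n k cl"
  defines "A \<equiv> P * B * transpose_mat P"
  defines "L \<equiv> mat n n (\<lambda>(i, j). if i = j then (A *\<^sub>v vec n (\<lambda>_. 1)) $ i else 0) - A"
  defines "nmin \<equiv> real (MIN j\<in>{..<k}. card (blk n cl j))"
  defines "bmin \<equiv> (MIN i\<in>{..<k}. (B *\<^sub>v vec k (\<lambda>_. 1)) $ i)"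
  assumes "k < n"
    and "\<forall>i<n. cl i < k"
    and "\<forall>j<k. blk n cl j \<noteq> {}"
    and "Q \<in> carrier_mat k k" and "W \<in> carrier_mat k k"
    and "transpose_mat Q = Q" and "transpose_mat W = W"
    and "\<forall>i<k. \<forall>j<k. 0 \<le> Q $$ (i, j) \<and> Q $$ (i, j) \<le> 1 \<and> 0 \<le> W $$ (i, j)"
    and "\<rho> \<ge> 1" and "\<Delta> > 0"
    and "real (MAX j\<in>{..<k}. card (blk n cl j)) / real (MIN j\<in>{..<k}. card (blk n cl j)) \<le> \<rho>"
    and "(MIN i\<in>{..<k}. B $$ (i, i))
           - 2 * \<rho> * (MAX i\<in>{..<k}. \<Sum>j\<in>{..<k} - {i}. B $$ (i, j)) \<ge> \<Delta>"
  shows "block_ideal n k cl L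
         \<and> eig_asc L (k + 1) \<ge> bmin * nmin
         \<and> eig_asc L (k + 1) - eig_asc L k \<ge> \<Delta> * nmin"
proof -
  note hyps = assms(7-)
  have Q_sym: "Q $$ (a, b) = Q $$ (b, a)" and W_sym: "W $$ (a, b) = W $$ (b, a)"
    if "a < k" "b < k" for a b
    using sym_mat_index_swap[OF hyps(4,6)] sym_mat_index_swap[OF hyps(5,7)] that by auto
  interpret sbm: block_laplacian n k cl B
    using hyps Q_sym W_sym by unfold_locales (auto simp: B_def)
  have L_eq: "L = sbm.L"
    unfolding L_def A_def P_def sbm.L_def sbm.A_def sbm.P_def ..
  have nmin_eq: "nmin = real (MIN a\<in>{..<k}. sbm.block_size a)"
    unfolding nmin_def sbm.block_size_def ..
  have gap: "\<Delta> * nmin \<le> sbm.deg_min - sbm.cross_bound"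
    using sbm.spectral_gap_ge[of \<rho> \<Delta>] hyps(11,12)
    unfolding nmin_def sbm.block_size_def sbm.cross_def by simp
  have "0 < nmin" unfolding nmin_eq using sbm.block_size_Min_pos by simp
  hence "0 < \<Delta> * nmin" using hyps(10) by simp
  with gap have "sbm.cross_bound < sbm.deg_min" by linarith
  moreover have "bmin * nmin \<le> sbm.deg_min"
    unfolding bmin_def nmin_eq by (rule sbm.deg_min_ge_row_sum_min)
  ultimately show ?thesis
    unfolding L_eq using sbm.block_ideal_L sbm.deg_min_le_eig_asc_Suc_k sbm.eig_asc_k_le_cross_bound gap
    by force
qed

end
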